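(* Let $m,n,d,e$ be positive integers with $m=2n$ and $e=\gcd(n,d)=\gcd(m,d)$, and let $s\ge u\ge1$ be integers. If $(x_1,x_2,\dots,x_{2u})\in V_{s,u}$, then $x_1,x_2,x_4,x_6,\dots,x_{2u}$ are linearly dependent over $\mathbb{F}_{2^e}$.
   Context: For integers $s\ge0$ and $u\ge1$, $V_{s,u}$ denotes the set of solutions $(x_1,\dots,x_{2u})\in\mathbb{F}_{2^m}^{2u}$ of the system \[\sum_{i=1}^u\big(x_{2i-1}x_{2i}^{2^{(\frac{n}{e}-j)d}}+x_{2i-1}^{2^{(\frac{n}{e}-j)d}}x_{2i}\big)=0,\qquad j=0,1,\dots,s.\] *)

theory Defs
  imports Main
begin

text \<open>The field F_{2^m} is modelled by a finite field type 'a with CARD('a) = 2^m.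
  The subfield F_{2^e} is the set of fixed points of x \<mapsto> x^(2^e).\<close>

definition subfield_pow2 :: "nat \<Rightarrow> 'a::field set" where
  "subfield_pow2 e = {x. x ^ (2 ^ e) = x}"

text \<open>Frobenius power x^(2^k) for an integer exponent k, interpreted in F_{2^m}
  (where x^(2^m) = x), i.e. the exponent k is reduced modulo m.\<close>

definition frob :: "nat \<Rightarrow> int \<Rightarrow> 'a::field \<Rightarrow> 'a" where
  "frob m k x = x ^ (2 ^ nat (k mod int m))"

text \<open>V_{s,u}: tuples (x_1,...,x_{2u}), represented as functions on indices 1..2u
  (values at other indices are irrelevant).\<close>

definition V :: "nat \<Rightarrow> nat \<Rightarrow> nat \<Rightarrow> nat \<Rightarrow> nat \<Rightarrow> nat \<Rightarrow> (nat \<Rightarrow> 'a::field) set" where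
  "V m n d e s u = {x. \<forall>j\<le>s.
     (\<Sum>i=1..u. x (2*i-1) * frob m ((int (n div e) - int j) * int d) (x (2*i))
              + frob m ((int (n div e) - int j) * int d) (x (2*i-1)) * x (2*i)) = 0}"

definition lin_dep_over :: "'a::field set \<Rightarrow> nat set \<Rightarrow> (nat \<Rightarrow> 'a) \<Rightarrow> bool" where
  "lin_dep_over F I x = (\<exists>c. (\<forall>i\<in>I. c i \<in> F) \<and> (\<exists>i\<in>I. c i \<noteq> 0) \<and> (\<Sum>i\<in>I. c i * x i) = 0)"

end

theory Submission
  imports Defs "HOL-Number_Theory.Residues"
begin

text \<open>
  Let \<open>\<sigma> y = y ^ 2 ^ d\<close> on \<open>GF(2^m)\<close>. As \<open>gcd d m = e\<close>, its fixed field \<open>K\<close> is \<open>GF(2^e)\<close>,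
  and \<open>\<sigma>\<^sup>2\<^sup>k = id\<close> for \<open>k = n div e\<close>. Applying \<open>\<rho> = \<sigma>\<^sup>k\<close>, resp. \<open>\<sigma>\<^sup>j\<close>, to the \<open>j\<close>-th equation
  defining \<open>V s u\<close> yields, for every shift \<open>-u \<le> t \<le> u\<close>,
  \<open>\<Sum>i. \<rho> (x (2i-1)) * \<sigma>\<^sup>t (x (2i)) + \<sigma>\<^sup>t (x (2i-1)) * \<rho> (x (2i)) = 0\<close>,
  i.e. \<open>2u + 1\<close> consecutive twists of a single relation.

  If \<open>x 1, x 2, x 4, \<dots>, x (2u)\<close> were independent over \<open>K\<close>, extend them to a \<open>K\<close>-basis \<open>B\<close> of
  the span of \<open>x 1, \<dots>, x (2u)\<close> and expand every \<open>x j\<close> in \<open>B\<close>. Since the Moore matrix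
  \<open>(\<sigma>\<^sup>l b)\<close> of a \<open>K\<close>-independent family is nonsingular, \<open>card B \<le> 2u\<close> consecutive twists
  force every \<open>B\<close>-coordinate of the relation to vanish. The coordinate at \<open>x 1\<close> reads
  \<open>\<rho> (\<Sum>i. g i * x (2i)) = 0\<close>, where \<open>g i \<in> K\<close> is the \<open>x 1\<close>-coordinate of \<open>x (2i-1)\<close>
  and \<open>g 1 = 1\<close>: a nontrivial \<open>K\<close>-relation among \<open>x 2, \<dots>, x (2u)\<close>.
\<close>

section \<open>Linear independence over the fixed field of a field endomorphism\<close>

lemma lin_dep_overI:
  "\<lbrakk>\<forall>i\<in>I. c i \<in> F; i \<in> I; c i \<noteq> 0; (\<Sum>i\<in>I. c i * x i) = 0\<rbrakk> \<Longrightarrow> lin_dep_over F I x"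
  unfolding lin_dep_over_def by blast

lemma not_lin_dep_overD:
  "\<lbrakk>\<not> lin_dep_over F I x; \<forall>i\<in>I. c i \<in> F; (\<Sum>i\<in>I. c i * x i) = 0; i \<in> I\<rbrakk> \<Longrightarrow> c i = 0"
  unfolding lin_dep_over_def by blast

lemma sum_delta_mult:
  fixes y :: "'b \<Rightarrow> 'a::semiring_1"
  assumes "finite B" "j \<in> B"
  shows "(\<Sum>q\<in>B. (if q = j then 1 else 0) * y q) = y j"
proof -
  have "(\<Sum>q\<in>B. (if q = j then 1 else 0) * y q) = (\<Sum>q\<in>B. if q = j then y q else 0)"
    by (rule sum.cong) simp_all
  then show ?thesis
    using assms by simp
qed


lemma not_lin_dep_over_nonzero:
  fixes y :: "nat \<Rightarrow> 'a::field"
  assumes "0 \<in> F" "1 \<in> F" "finite I" "\<not> lin_dep_over F I y" "j \<in> I"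
  shows "y j \<noteq> 0"
proof
  assume "y j = 0"
  have "lin_dep_over F I y"
    by (rule lin_dep_overI[of _ "\<lambda>i. if i = j then 1 else 0" _ j])
      (use assms \<open>y j = 0\<close> in \<open>simp_all add: sum_delta_mult\<close>)
  with assms(4) show False ..
qed

lemma lin_dep_over_evensI:
  fixes y :: "nat \<Rightarrow> 'a::field"
  assumes "(\<Sum>i=1..u. c i * y (2*i)) = 0" "\<forall>i\<in>{1..u}. c i \<in> F" "0 \<in> F" "1 \<le> u" "c 1 \<noteq> 0"
  shows "lin_dep_over F ({1} \<union> {2*i | i. 1 \<le> i \<and> i \<le> u}) y"
proof -
  define c' where "c' j = (if j = 1 then 0 else c (j div 2))" for j
  have I: "{1} \<union> {2*i | i. 1 \<le> i \<and> i \<le> u} = insert 1 ((\<lambda>i. 2*i) ` {1..u})"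
    by auto
  have "(\<Sum>j\<in>insert 1 ((\<lambda>i. 2*i) ` {1..u}). c' j * y j) = (\<Sum>i=1..u. c i * y (2*i))"
    by (subst sum.insert) (auto simp: c'_def sum.reindex inj_on_def)
  moreover have "\<forall>j\<in>insert 1 ((\<lambda>i. 2*i) ` {1..u}). c' j \<in> F"
    using assms(2,3) by (auto simp: c'_def)
  ultimately show ?thesis
    unfolding I using assms(1,4,5)
    by (intro lin_dep_overI[of _ c' _ 2]) (auto simp: c'_def image_iff intro: bexI[of _ 1])
qed

locale field_endomorphism =
  fixes \<sigma> :: "'a::field \<Rightarrow> 'a"
  assumes hom_add: "\<sigma> (x + y) = \<sigma> x + \<sigma> y"
    and hom_mult: "\<sigma> (x * y) = \<sigma> x * \<sigma> y"
    and hom_one [simp]: "\<sigma> 1 = 1"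
begin

lemma hom_zero [simp]: "\<sigma> 0 = 0"
  using hom_add[of 0 0] by (metis add_cancel_right_right)

lemma hom_uminus: "\<sigma> (- x) = - \<sigma> x"
  using hom_add[of x "- x"] by (simp add: add_eq_0_iff)

lemma hom_diff: "\<sigma> (x - y) = \<sigma> x - \<sigma> y"
  using hom_add[of x "- y"] by (simp add: hom_uminus)

lemma hom_sum: "\<sigma> (\<Sum>i\<in>A. f i) = (\<Sum>i\<in>A. \<sigma> (f i))"
  by (induction A rule: infinite_finite_induct) (simp_all add: hom_add)

lemma hom_eq_0_iff [simp]: "\<sigma> x = 0 \<longleftrightarrow> x = 0"
  using hom_mult[of x "inverse x"] by (cases "x = 0") auto

lemma hom_divide: "\<sigma> (x / y) = \<sigma> x / \<sigma> y"
proof (cases "y = 0")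
  case False
  then show ?thesis
    using hom_mult[of "x / y" y] by (simp add: eq_divide_eq)
qed simp

lemma funpow_field_endomorphism: "field_endomorphism (\<sigma> ^^ n)"
proof (induction n)
  case (Suc n)
  interpret \<tau>: field_endomorphism "\<sigma> ^^ n"
    by (fact Suc.IH)
  show ?case
    by unfold_locales (simp_all add: hom_add hom_mult \<tau>.hom_add \<tau>.hom_mult)
qed (unfold_locales, simp_all)

definition fixed_field :: "'a set" where
  "fixed_field = {x. \<sigma> x = x}"

lemma fixed_field_0 [simp]: "0 \<in> fixed_field"
  and fixed_field_1 [simp]: "1 \<in> fixed_field"
  by (simp_all add: fixed_field_def)

lemma fixed_field_uminus: "a \<in> fixed_field \<Longrightarrow> - a \<in> fixed_field"
  and fixed_field_diff: "a \<in> fixed_field \<Longrightarrow> b \<in> fixed_field \<Longrightarrow> a - b \<in> fixed_field"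
  and fixed_field_divide: "a \<in> fixed_field \<Longrightarrow> b \<in> fixed_field \<Longrightarrow> a / b \<in> fixed_field"
  by (simp_all add: fixed_field_def hom_uminus hom_diff hom_divide)

lemma fixed_field_funpow: "a \<in> fixed_field \<Longrightarrow> (\<sigma> ^^ n) a = a"
  by (induction n) (simp_all add: fixed_field_def)

definition fixed_span :: "nat set \<Rightarrow> (nat \<Rightarrow> 'a) \<Rightarrow> 'a set" where
  "fixed_span B y = {\<Sum>q\<in>B. g q * y q | g. \<forall>q\<in>B. g q \<in> fixed_field}"

lemma fixed_span_sumI: "\<forall>q\<in>B. g q \<in> fixed_field \<Longrightarrow> (\<Sum>q\<in>B. g q * y q) \<in> fixed_span B y"
  unfolding fixed_span_def by blast

lemma fixed_span_base: "finite B \<Longrightarrow> j \<in> B \<Longrightarrow> y j \<in> fixed_span B y"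
  using fixed_span_sumI[of B "\<lambda>q. if q = j then 1 else 0" y] by (simp add: sum_delta_mult)

lemma fixed_span_mono:
  assumes "I \<subseteq> B" "finite B"
  shows "fixed_span I y \<subseteq> fixed_span B y"
proof
  fix v assume "v \<in> fixed_span I y"
  then obtain g where g: "\<forall>q\<in>I. g q \<in> fixed_field" and v: "v = (\<Sum>q\<in>I. g q * y q)"
    by (auto simp: fixed_span_def)
  define h where "h q = (if q \<in> I then g q else 0)" for q
  have "v = (\<Sum>q\<in>B. h q * y q)"
    unfolding v h_def using assms by (intro sum.mono_neutral_cong_left) auto
  moreover have "\<forall>q\<in>B. h q \<in> fixed_field"
    using g by (simp add: h_def)
  ultimately show "v \<in> fixed_span B y"
    by (simp only: fixed_span_sumI)
qed

lemma in_fixed_span_if_dependent_insert: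
  assumes "finite I" "r \<notin> I" "\<not> lin_dep_over fixed_field I y"
    and "lin_dep_over fixed_field (insert r I) y"
  shows "y r \<in> fixed_span I y"
proof -
  from assms(4) obtain g where g: "\<forall>q\<in>insert r I. g q \<in> fixed_field"
    and nonzero: "\<exists>q\<in>insert r I. g q \<noteq> 0" and rel: "(\<Sum>q\<in>insert r I. g q * y q) = 0"
    unfolding lin_dep_over_def by blast
  have rel': "g r * y r + (\<Sum>q\<in>I. g q * y q) = 0"
    using rel assms(1,2) by simp
  have "g r \<noteq> 0"
  proof
    assume "g r = 0"
    then have "\<forall>q\<in>I. g q = 0"
      using rel' g not_lin_dep_overD[OF assms(3)] by simp
    with nonzero \<open>g r = 0\<close> show False
      by auto
  qed
  have "y r = g r * y r / g r"
    using \<open>g r \<noteq> 0\<close> by simp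
  also have "\<dots> = - (\<Sum>q\<in>I. g q * y q) / g r"
    using rel' by (simp add: add_eq_0_iff2)
  also have "\<dots> = (\<Sum>q\<in>I. (- g q / g r) * y q)"
    by (simp add: sum_divide_distrib sum_negf)
  finally have "y r = (\<Sum>q\<in>I. (- g q / g r) * y q)" .
  moreover have "\<forall>q\<in>I. - g q / g r \<in> fixed_field"
    using g by (simp add: fixed_field_divide fixed_field_uminus)
  ultimately show ?thesis
    by (simp only: fixed_span_sumI)
qed

lemma exists_independent_spanning_superset:
  assumes "finite R" "finite I" "\<not> lin_dep_over fixed_field I y"
  shows "\<exists>B. I \<subseteq> B \<and> B \<subseteq> I \<union> R \<and> \<not> lin_dep_over fixed_field B y \<and>
     y ` (I \<union> R) \<subseteq> fixed_span B y"
  using assms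
proof (induction R arbitrary: I rule: finite_induct)
  case empty
  then show ?case
    by (auto intro: fixed_span_base)
next
  case (insert r R)
  show ?case
  proof (cases "lin_dep_over fixed_field (insert r I) y")
    case False
    then obtain B where "insert r I \<subseteq> B" "B \<subseteq> insert r I \<union> R"
      "\<not> lin_dep_over fixed_field B y" "y ` (insert r I \<union> R) \<subseteq> fixed_span B y"
      using insert.IH[of "insert r I"] insert.prems(1) by blast
    then show ?thesis
      by (intro exI[of _ B]) auto
  next
    case True
    from insert.IH[OF insert.prems] obtain B where B: "I \<subseteq> B" "B \<subseteq> I \<union> R"
      "\<not> lin_dep_over fixed_field B y" "y ` (I \<union> R) \<subseteq> fixed_span B y"
      by blast
    have "finite B"
      using B(2) insert.hyps(1) insert.prems(1) by (auto intro: finite_subset)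
    have yr: "y r \<in> fixed_span B y"
    proof (cases "r \<in> I")
      case False
      then show ?thesis
        using in_fixed_span_if_dependent_insert[OF insert.prems(1) False insert.prems(2) True]
          fixed_span_mono[OF B(1) \<open>finite B\<close>] by blast
    qed (use B(4) in blast)
    have "y ` (I \<union> insert r R) \<subseteq> fixed_span B y"
      using B(4) yr by simp
    moreover have "B \<subseteq> I \<union> insert r R"
      using B(2) by blast
    ultimately show ?thesis
      using B(1,3) by blast
  qed
qed

lemma fixed_span_coefficients_unique:
  assumes "finite B" "\<not> lin_dep_over fixed_field B y" "j \<in> B"
    and "\<forall>q\<in>B. g q \<in> fixed_field" "y j = (\<Sum>q\<in>B. g q * y q)" "q \<in> B"
  shows "g q = (if q = j then 1 else 0)"
proof -
  define h where "h q = g q - (if q = j then 1 else 0)" for q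
  have "(\<Sum>q\<in>B. h q * y q) = (\<Sum>q\<in>B. g q * y q) - (\<Sum>q\<in>B. (if q = j then 1 else 0) * y q)"
    unfolding h_def by (simp add: left_diff_distrib sum_subtractf)
  also have "\<dots> = 0"
    by (simp add: sum_delta_mult[OF assms(1,3)] flip: assms(5))
  finally have "(\<Sum>q\<in>B. h q * y q) = 0" .
  moreover have "\<forall>q\<in>B. h q \<in> fixed_field"
    using assms(4) by (simp add: h_def fixed_field_diff)
  ultimately have "h q = 0"
    using not_lin_dep_overD[OF assms(2) _ _ assms(6)] by blast
  then show ?thesis
    by (simp add: h_def)
qed

lemmas funpow_hom_diff = field_endomorphism.hom_diff[OF funpow_field_endomorphism]
  and funpow_hom_sum = field_endomorphism.hom_sum[OF funpow_field_endomorphism]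
  and funpow_hom_mult = field_endomorphism.hom_mult[OF funpow_field_endomorphism]
  and funpow_hom_divide = field_endomorphism.hom_divide[OF funpow_field_endomorphism]
  and funpow_hom_eq_0_iff = field_endomorphism.hom_eq_0_iff[OF funpow_field_endomorphism]
  and funpow_hom_one = field_endomorphism.hom_one[OF funpow_field_endomorphism]

lemma independent_normalized_differences:
  assumes "finite J" "p \<notin> J" "\<not> lin_dep_over fixed_field (insert p J) y" "y p \<noteq> 0"
  shows "\<not> lin_dep_over fixed_field J (\<lambda>q. \<sigma> (y q / y p) - y q / y p)"
proof
  define y' where "y' q = y q / y p" for q
  assume "lin_dep_over fixed_field J (\<lambda>q. \<sigma> (y q / y p) - y q / y p)"
  then obtain g i where g: "\<forall>q\<in>J. g q \<in> fixed_field" and i: "i \<in> J" "g i \<noteq> 0"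
    and rel: "(\<Sum>q\<in>J. g q * (\<sigma> (y' q) - y' q)) = 0"
    unfolding lin_dep_over_def y'_def by blast
  define S where "S = (\<Sum>q\<in>J. g q * y' q)"
  have "\<sigma> S - S = (\<Sum>q\<in>J. g q * (\<sigma> (y' q) - y' q))"
    using g by (simp add: S_def hom_sum hom_mult fixed_field_def sum_subtractf right_diff_distrib)
  then have "S \<in> fixed_field"
    using rel by (simp add: fixed_field_def)
  define g' where "g' = g(p := - S)"
  have "(\<Sum>q\<in>J. g' q * y q) = (\<Sum>q\<in>J. g q * y q)"
    using assms(2) by (intro sum.cong) (auto simp: g'_def)
  then have "(\<Sum>q\<in>insert p J. g' q * y q) = - S * y p + (\<Sum>q\<in>J. g q * y q)"
    using assms(1,2) by (simp add: g'_def)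
  also have "(\<Sum>q\<in>J. g q * y q) = y p * S"
    using assms(4) by (simp add: S_def y'_def sum_distrib_left)
  finally have "(\<Sum>q\<in>insert p J. g' q * y q) = 0"
    by simp
  moreover have "\<forall>q\<in>insert p J. g' q \<in> fixed_field"
    using g \<open>S \<in> fixed_field\<close> by (simp add: g'_def fixed_field_uminus)
  moreover have "g' i \<noteq> 0"
    using i assms(2) by (auto simp: g'_def)
  ultimately have "lin_dep_over fixed_field (insert p J) y"
    using i(1) by (intro lin_dep_overI[of _ g' _ i]) simp_all
  with assms(3) show False ..
qed

lemma moore_matrix_nonsingular:
  assumes "finite J" "\<not> lin_dep_over fixed_field J y"
    and "\<forall>l<card J. (\<Sum>q\<in>J. c q * (\<sigma> ^^ (M + l)) (y q)) = 0"
  shows "\<forall>q\<in>J. c q = 0"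
  using assms
proof (induction J arbitrary: y c M rule: finite_induct)
  case (insert p J)
  note indep = insert.prems(1) and eqs = insert.prems(2)
  have "y p \<noteq> 0"
    using insert.hyps(1) by (intro not_lin_dep_over_nonzero[OF fixed_field_0 fixed_field_1 _ indep]) simp_all
  define y' where "y' q = y q / y p" for q
  define E where "E N = (\<Sum>q\<in>insert p J. c q * (\<sigma> ^^ N) (y' q))" for N
  have E_split: "E N = c p + (\<Sum>q\<in>J. c q * (\<sigma> ^^ N) (y' q))" for N
    using insert.hyps \<open>y p \<noteq> 0\<close> by (simp add: E_def y'_def funpow_hom_one)
  have E_vanishes: "E (M + l) = 0" if "l < card (insert p J)" for l
    using eqs that
    by (simp add: E_def y'_def funpow_hom_divide sum_divide_distrib[symmetric] mult.assoc)
  \<comment> \<open>Differencing consecutive relations eliminates \<open>c p\<close>, because \<open>y' p = 1\<close> is fixed by \<open>\<sigma>\<close>.\<close>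
  have "(\<Sum>q\<in>J. c q * (\<sigma> ^^ (M + l)) (\<sigma> (y' q) - y' q)) = 0" if "l < card J" for l
  proof -
    have "(\<Sum>q\<in>J. c q * (\<sigma> ^^ (M + l)) (\<sigma> (y' q) - y' q)) = (E (M + Suc l) - c p) - (E (M + l) - c p)"
      by (simp add: E_split funpow_hom_diff funpow_swap1 right_diff_distrib sum_subtractf)
    also have "\<dots> = 0"
      using E_vanishes[of l] E_vanishes[of "Suc l"] that insert.hyps by simp
    finally show ?thesis .
  qed
  then have "\<forall>q\<in>J. c q = 0"
    using insert.IH independent_normalized_differences[OF insert.hyps indep \<open>y p \<noteq> 0\<close>]
    unfolding y'_def by blast
  moreover have "(\<Sum>q\<in>insert p J. c q * (\<sigma> ^^ M) (y q)) = 0"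
    using eqs[rule_format, of 0] insert.hyps by simp
  ultimately show ?case
    using insert.hyps \<open>y p \<noteq> 0\<close> by (simp add: funpow_hom_eq_0_iff)
qed simp

lemma moore_relations_coordinates:
  fixes v a :: "'p \<Rightarrow> 'a" and G :: "'p \<Rightarrow> nat \<Rightarrow> 'a"
  assumes "finite B" "\<not> lin_dep_over fixed_field B y" "finite P"
    and "\<forall>p\<in>P. \<forall>q\<in>B. G p q \<in> fixed_field" "\<forall>p\<in>P. v p = (\<Sum>q\<in>B. G p q * y q)"
    and "\<forall>l<card B. (\<Sum>p\<in>P. a p * (\<sigma> ^^ (M + l)) (v p)) = 0"
  shows "\<forall>q\<in>B. (\<Sum>p\<in>P. a p * G p q) = 0"
proof -
  have "(\<Sum>p\<in>P. a p * (\<sigma> ^^ N) (v p)) = (\<Sum>q\<in>B. (\<Sum>p\<in>P. a p * G p q) * (\<sigma> ^^ N) (y q))" for N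
  proof -
    have "(\<Sum>p\<in>P. a p * (\<sigma> ^^ N) (v p)) = (\<Sum>p\<in>P. \<Sum>q\<in>B. a p * G p q * (\<sigma> ^^ N) (y q))"
      using assms(4,5)
      by (intro sum.cong) (simp_all add: funpow_hom_sum funpow_hom_mult fixed_field_funpow
          sum_distrib_left mult.assoc)
    also have "\<dots> = (\<Sum>q\<in>B. \<Sum>p\<in>P. a p * G p q * (\<sigma> ^^ N) (y q))"
      by (rule sum.swap)
    finally show ?thesis
      by (simp add: sum_distrib_right)
  qed
  then show ?thesis
    using moore_matrix_nonsingular[OF assms(1,2), of _ M] assms(6) by simp
qed

lemma obtain_fixed_basis_coordinates:
  assumes "finite R" "I \<subseteq> R" "\<not> lin_dep_over fixed_field I y"
  obtains B G where "I \<subseteq> B" "B \<subseteq> R" "\<not> lin_dep_over fixed_field B y"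
    and "\<And>j q. j \<in> R \<Longrightarrow> q \<in> B \<Longrightarrow> G j q \<in> fixed_field"
    and "\<And>j. j \<in> R \<Longrightarrow> y j = (\<Sum>q\<in>B. G j q * y q)"
    and "\<And>j q. j \<in> B \<Longrightarrow> q \<in> B \<Longrightarrow> G j q = (if q = j then 1 else 0)"
proof -
  have "I \<union> R = R" "finite I"
    using assms(1,2) finite_subset by auto
  then obtain B where B: "I \<subseteq> B" "B \<subseteq> R" "\<not> lin_dep_over fixed_field B y" "y ` R \<subseteq> fixed_span B y"
    using exists_independent_spanning_superset[OF assms(1) _ assms(3)] by auto
  have "\<forall>j\<in>R. \<exists>g. (\<forall>q\<in>B. g q \<in> fixed_field) \<and> y j = (\<Sum>q\<in>B. g q * y q)"
    using B(4) by (auto simp: fixed_span_def)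
  then obtain G where G: "\<forall>j\<in>R. (\<forall>q\<in>B. G j q \<in> fixed_field) \<and> y j = (\<Sum>q\<in>B. G j q * y q)"
    by (rule bchoice[THEN exE]) blast
  have "finite B"
    using B(2) assms(1) finite_subset by blast
  then have G_basis: "G j q = (if q = j then 1 else 0)" if "j \<in> B" "q \<in> B" for j q
    using fixed_span_coefficients_unique[OF _ B(3) that(1) _ _ that(2), of "G j"] G B(2) that(1) by blast
  show ?thesis
    using G G_basis by (intro that[OF B(1-3)]) blast+
qed

lemma paired_twisted_relations_dependent:
  fixes y :: "nat \<Rightarrow> 'a"
  assumes \<rho>: "field_endomorphism \<rho>" "\<forall>a\<in>fixed_field. \<rho> a = a" and "1 \<le> u"
    and rel: "\<forall>l\<le>2*u. (\<Sum>i=1..u. \<rho> (y (2*i-1)) * (\<sigma> ^^ (M + l)) (y (2*i))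
                         + (\<sigma> ^^ (M + l)) (y (2*i-1)) * \<rho> (y (2*i))) = 0"
  shows "lin_dep_over fixed_field ({1} \<union> {2*i | i. 1 \<le> i \<and> i \<le> u}) y"
proof (rule ccontr)
  define I where "I = {1} \<union> {2*i | i. 1 \<le> i \<and> i \<le> u}"
  assume indep: "\<not> lin_dep_over fixed_field I y"
  have "I \<subseteq> {1..2*u}"
    using \<open>1 \<le> u\<close> by (auto simp: I_def)
  then obtain B G where B: "I \<subseteq> B" "B \<subseteq> {1..2*u}" "\<not> lin_dep_over fixed_field B y"
    and G_fixed: "\<And>j q. j \<in> {1..2*u} \<Longrightarrow> q \<in> B \<Longrightarrow> G j q \<in> fixed_field"
    and G_coords: "\<And>j. j \<in> {1..2*u} \<Longrightarrow> y j = (\<Sum>q\<in>B. G j q * y q)"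
    and G_basis: "\<And>j q. j \<in> B \<Longrightarrow> q \<in> B \<Longrightarrow> G j q = (if q = j then 1 else 0)"
    using obtain_fixed_basis_coordinates[OF finite_atLeastAtMost _ indep] by blast
  have "finite B" "card B \<le> 2*u" "1 \<in> B" "\<forall>i\<in>{1..u}. 2*i \<in> B"
    using B(1,2) finite_subset card_mono[OF _ B(2)] by (auto simp: I_def)
  have indices: "2*i \<in> {1..2*u}" "2*i-1 \<in> {1..2*u}" if "i \<in> {1..u}" for i
    using that by auto
  \<comment> \<open>In effect, the relations say that the tensor
    \<open>\<Sum>i. \<rho> (y (2*i-1)) \<otimes> y (2*i) + \<rho> (y (2*i)) \<otimes> y (2*i-1)\<close> over the fixed field vanishes;
    its coordinate at the basis vector \<open>y 1\<close> is a relation among the \<open>\<rho> (y (2*i))\<close>.\<close>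
  define v where "v = case_sum (\<lambda>i. y (2*i)) (\<lambda>i. y (2*i-1))"
  define a where "a = case_sum (\<lambda>i. \<rho> (y (2*i-1))) (\<lambda>i. \<rho> (y (2*i)))"
  define H where "H = case_sum (\<lambda>i. G (2*i)) (\<lambda>i. G (2*i-1))"
  have "\<forall>q\<in>B. (\<Sum>p\<in>Sum_Type.Plus {1..u} {1..u}. a p * H p q) = 0"
  proof (rule moore_relations_coordinates[OF \<open>finite B\<close> B(3)])
    show "\<forall>p\<in>Sum_Type.Plus {1..u} {1..u}. \<forall>q\<in>B. H p q \<in> fixed_field"
      and "\<forall>p\<in>Sum_Type.Plus {1..u} {1..u}. v p = (\<Sum>q\<in>B. H p q * y q)"
      using G_fixed G_coords indices by (auto simp: H_def v_def)
    show "\<forall>l<card B. (\<Sum>p\<in>Sum_Type.Plus {1..u} {1..u}. a p * (\<sigma> ^^ (M + l)) (v p)) = 0"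
      using rel \<open>card B \<le> 2*u\<close> by (simp add: sum.Plus a_def v_def sum.distrib[symmetric] ac_simps)
  qed simp
  then have coordinate_1:
    "(\<Sum>i=1..u. \<rho> (y (2*i-1)) * G (2*i) 1) + (\<Sum>i=1..u. \<rho> (y (2*i)) * G (2*i-1) 1) = 0"
    using \<open>1 \<in> B\<close> by (simp add: sum.Plus a_def H_def comp_def)
  have "(\<Sum>i=1..u. \<rho> (y (2*i-1)) * G (2*i) 1) = 0"
    using G_basis \<open>1 \<in> B\<close> \<open>\<forall>i\<in>{1..u}. 2*i \<in> B\<close> by (intro sum.neutral) auto
  have "\<rho> (\<Sum>i=1..u. G (2*i-1) 1 * y (2*i)) = (\<Sum>i=1..u. \<rho> (y (2*i)) * G (2*i-1) 1)"
    using G_fixed[OF indices(2) \<open>1 \<in> B\<close>] \<rho>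
    by (simp add: field_endomorphism.hom_sum field_endomorphism.hom_mult mult.commute)
  also have "\<dots> = 0"
    using coordinate_1 \<open>(\<Sum>i=1..u. \<rho> (y (2*i-1)) * G (2*i) 1) = 0\<close> by simp
  finally have "(\<Sum>i=1..u. G (2*i-1) 1 * y (2*i)) = 0"
    using field_endomorphism.hom_eq_0_iff[OF \<rho>(1)] by simp
  then have "lin_dep_over fixed_field I y"
    unfolding I_def using G_fixed[OF indices(2) \<open>1 \<in> B\<close>] G_basis[OF \<open>1 \<in> B\<close> \<open>1 \<in> B\<close>] \<open>1 \<le> u\<close>
    by (intro lin_dep_over_evensI[of "\<lambda>i. G (2*i-1) 1"]) auto
  with indep show False ..
qed

end

section \<open>Frobenius powers in the field with \<open>2 ^ m\<close> elements\<close>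

lemma CHAR_eq_if_card_eq_prime_power:
  assumes "prime p" "card (UNIV :: 'a::{field,finite} set) = p ^ m"
  shows "CHAR('a) = p"
proof -
  have "prime CHAR('a)"
    using prime_CHAR_semidom[where ?'a = 'a] finite_imp_CHAR_pos[where ?'a = 'a] by simp
  moreover have "CHAR('a) dvd p ^ m"
    using CHAR_dvd_CARD[where ?'a = 'a] assms(2) by simp
  ultimately show ?thesis
    using assms(1) prime_dvd_power primes_dvd_imp_eq by blast
qed

(* The library's finite_field_power_card_eq_same needs the class finite_field,
   which a type of sort {field, finite} is not known to belong to. *)
lemma power_card_UNIV_eq_self:
  fixes x :: "'a::{field,finite}"
  shows "x ^ card (UNIV :: 'a set) = x"
proof (cases "x = 0")
  case False
  let ?U = "UNIV - {0} :: 'a set"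
  have "bij_betw ((*) x) ?U ?U"
    using False by (intro bij_betwI[of _ _ _ "\<lambda>y. y / x"]) auto
  then have "\<Prod>?U = (\<Prod>y\<in>?U. x * y)"
    by (rule prod.reindex_bij_betw[symmetric])
  also have "\<dots> = x ^ card ?U * \<Prod>?U"
    by (simp only: prod.distrib prod_constant)
  finally have "1 * \<Prod>?U = x ^ card ?U * \<Prod>?U"
    by simp
  moreover have "\<Prod>?U \<noteq> 0"
    by simp
  ultimately have "x ^ card ?U = 1"
    by (metis mult_cancel_right)
  moreover have "card (UNIV :: 'a set) = Suc (card ?U)"
    using card_Suc_Diff1[of "UNIV :: 'a set" 0] by simp
  ultimately show ?thesis
    by (simp only: power_Suc2 mult_1)
qed (simp add: finite_UNIV_card_ge_0)

lemma power_two_power_mult_eq_self: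
  fixes x :: "'a::monoid_mult"
  assumes "x ^ 2 ^ d = x"
  shows "x ^ 2 ^ (d * t) = x"
proof (induction t)
  case (Suc t)
  have "x ^ 2 ^ (d * Suc t) = x ^ (2 ^ (d * t) * 2 ^ d)"
    by (simp only: mult_Suc_right add.commute[of d] power_add)
  also have "\<dots> = (x ^ 2 ^ (d * t)) ^ 2 ^ d"
    by (rule power_mult)
  finally have "x ^ 2 ^ (d * Suc t) = (x ^ 2 ^ (d * t)) ^ 2 ^ d" .
  with Suc.IH assms show ?case
    by simp
qed simp

lemma power_two_power_mod:
  fixes x :: "'a::monoid_mult"
  assumes "\<forall>y::'a. y ^ 2 ^ m = y"
  shows "x ^ 2 ^ a = x ^ 2 ^ (a mod m)"
proof -
  have "x ^ 2 ^ a = (x ^ 2 ^ (a mod m)) ^ 2 ^ (m * (a div m))"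
    by (simp add: power_mult[symmetric] power_add[symmetric])
  also have "\<dots> = x ^ 2 ^ (a mod m)"
    using assms power_two_power_mult_eq_self by blast
  finally show ?thesis .
qed

lemma frob_mod: "frob m (z mod int m) = frob m z"
  by (simp add: frob_def fun_eq_iff)

lemma frob_add_multiple: "frob m (z + int m * c) = frob m z"
  by (simp add: frob_def fun_eq_iff)

lemma frob_of_nat:
  assumes "\<forall>y::'a::field. y ^ 2 ^ m = y"
  shows "frob m (int a) (x::'a) = x ^ 2 ^ a"
  using power_two_power_mod[OF assms, of x a] by (simp add: frob_def flip: of_nat_mod)

lemma frob_frob:
  assumes "\<forall>y::'a::field. y ^ 2 ^ m = y" "m > 0"
  shows "frob m a (frob m b (x::'a)) = frob m (a + b) x"
proof -
  obtain a' b' :: nat where a': "int a' = a mod int m" and b': "int b' = b mod int m"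
    using assms(2) by (metis pos_mod_sign of_nat_0_less_iff zero_le_imp_eq_int)
  have "frob m a (frob m b x) = frob m (int a') (frob m (int b') x)"
    by (simp only: a' b' frob_mod)
  also have "\<dots> = (x ^ 2 ^ b') ^ 2 ^ a'"
    by (simp add: frob_of_nat[OF assms(1)])
  also have "\<dots> = x ^ 2 ^ (a' + b')"
    by (simp add: power_add mult.commute flip: power_mult)
  also have "\<dots> = frob m (int a' + int b') x"
    by (simp add: frob_of_nat[OF assms(1)] flip: of_nat_add)
  also have "\<dots> = frob m (a + b) x"
    by (metis a' b' frob_mod mod_add_eq)
  finally show ?thesis .
qed

lemma funpow_frob:
  assumes "\<forall>y::'a::field. y ^ 2 ^ m = y" "m > 0"
  shows "(frob m z ^^ N) (x::'a) = frob m (int N * z) x"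
proof (induction N)
  case 0
  show ?case
    using frob_of_nat[OF assms(1), of 0 x] by simp
next
  case (Suc N)
  then show ?case
    by (simp add: frob_frob[OF assms] algebra_simps)
qed

lemma frob_field_endomorphism:
  assumes "CHAR('a::field) = 2"
  shows "field_endomorphism (frob m z :: 'a \<Rightarrow> 'a)"
proof
  have "prime CHAR('a)"
    using assms by simp
  then show "frob m z (x + y) = frob m z x + frob m z y" for x y :: 'a
    unfolding frob_def by (rule freshmans_dream') (simp add: assms)
qed (simp_all add: frob_def power_mult_distrib)

lemma power_two_power_eq_self_iff_gcd:
  fixes x :: "'a::monoid_mult"
  assumes "\<forall>y::'a. y ^ 2 ^ m = y" "d > 0"
  shows "x ^ 2 ^ d = x \<longleftrightarrow> x ^ 2 ^ gcd d m = x"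
proof
  assume fixed: "x ^ 2 ^ d = x"
  obtain X Y where XY: "d * X = m * Y + gcd d m"
    using bezout_nat[of d m] assms(2) by auto
  have "x ^ 2 ^ gcd d m = (x ^ 2 ^ gcd d m) ^ 2 ^ (m * Y)"
    using assms(1) power_two_power_mult_eq_self by metis
  also have "\<dots> = x ^ 2 ^ (gcd d m + m * Y)"
    by (simp only: power_mult[symmetric] power_add[symmetric])
  also have "\<dots> = x ^ 2 ^ (d * X)"
    by (simp only: XY add.commute)
  also have "\<dots> = x"
    using fixed by (rule power_two_power_mult_eq_self)
  finally show "x ^ 2 ^ gcd d m = x" .
next
  assume "x ^ 2 ^ gcd d m = x"
  then show "x ^ 2 ^ d = x"
    using power_two_power_mult_eq_self[of x "gcd d m" "d div gcd d m"] by simp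
qed

lemma frob_add_period_multiple:
  assumes "m = 2 * n" "e dvd n" "e dvd d"
  shows "frob m (int (2 * (n div e) * c) * int d + z) = frob m z"
proof -
  obtain a b where "n = e * a" "d = e * b"
    using assms(2,3) unfolding dvd_def by blast
  then have "int (2 * (n div e) * c) * int d = int m * int (c * (d div e))"
    by (cases "e = 0") (simp_all add: assms(1) ac_simps)
  then show ?thesis
    using frob_add_multiple[of m z "int (c * (d div e))"] by (simp only: add.commute)
qed

lemma frob_V_summand_sum:
  fixes x :: "nat \<Rightarrow> 'a::field"
  assumes "CHAR('a) = 2" "\<forall>y::'a. y ^ 2 ^ m = y" "m > 0"
  shows "frob m a (\<Sum>i\<in>A. x (2*i-1) * frob m z (x (2*i)) + frob m z (x (2*i-1)) * x (2*i))
       = (\<Sum>i\<in>A. frob m a (x (2*i-1)) * frob m (a + z) (x (2*i))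
                  + frob m (a + z) (x (2*i-1)) * frob m a (x (2*i)))"
proof -
  interpret field_endomorphism "frob m a :: 'a \<Rightarrow> 'a"
    using frob_field_endomorphism[OF assms(1)] .
  show ?thesis
    by (simp add: hom_sum hom_add hom_mult frob_frob[OF assms(2,3)])
qed

lemma V_shifted_relations:
  fixes x :: "nat \<Rightarrow> 'a::field"
  assumes "CHAR('a) = 2" "\<forall>y::'a. y ^ 2 ^ m = y" "m > 0" "m = 2 * n" "e dvd n" "e dvd d"
    and "x \<in> V m n d e s u" "\<bar>t\<bar> \<le> int s"
  shows "(\<Sum>i=1..u. frob m (int (n div e) * int d) (x (2*i-1)) * frob m (t * int d) (x (2*i))
            + frob m (t * int d) (x (2*i-1)) * frob m (int (n div e) * int d) (x (2*i))) = 0"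
proof -
  let ?k = "int (n div e)"
  have V_eq: "(\<Sum>i=1..u. x (2*i-1) * frob m ((?k - int j) * int d) (x (2*i))
              + frob m ((?k - int j) * int d) (x (2*i-1)) * x (2*i)) = 0" if "j \<le> s" for j
    using assms(7) that by (simp add: V_def)
  have frob_0: "frob m a 0 = (0::'a)" for a
    by (simp add: frob_def)
  \<comment> \<open>For \<open>t \<ge> 0\<close> apply \<open>\<sigma>\<^sup>t\<close> to equation \<open>t\<close>; for \<open>t < 0\<close> apply \<open>\<sigma>\<^sup>k\<close> to equation \<open>-t\<close> and use
    \<open>\<sigma>\<^sup>2\<^sup>k = id\<close>, where \<open>\<sigma> = frob m d\<close> and \<open>k = n div e\<close>.\<close>
  show ?thesis
  proof (cases "t \<ge> 0")
    case True
    have "?k * int d = t * int d + (?k - int (nat t)) * int d"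
      using True by (simp add: algebra_simps)
    then show ?thesis
      using frob_V_summand_sum[OF assms(1-3), of "t * int d" x "(?k - int (nat t)) * int d" "{1..u}"]
        V_eq[of "nat t"] True assms(8) frob_0 by (simp add: ac_simps)
  next
    case False
    define j where "j = nat (- t)"
    have "frob m (?k * int d + (?k - int j) * int d) = frob m (int (2 * (n div e) * 1) * int d + t * int d)"
      using False by (simp add: j_def algebra_simps)
    also have "\<dots> = frob m (t * int d)"
      by (rule frob_add_period_multiple[OF assms(4-6)])
    finally have shift: "frob m (?k * int d + (?k - int j) * int d) = frob m (t * int d)" .
    have "j \<le> s"
      using False assms(8) by (simp add: j_def)
    then show ?thesis
      using frob_V_summand_sum[OF assms(1-3), of "?k * int d" x "(?k - int j) * int d" "{1..u}"]
        V_eq[of j] frob_0 by (simp only: shift)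
  qed
qed

lemma V_funpow_relations:
  fixes x :: "nat \<Rightarrow> 'a::field"
  assumes "CHAR('a) = 2" "\<forall>y::'a. y ^ 2 ^ m = y" "m > 0" "m = 2 * n" "n > 0" "e dvd n" "e dvd d"
    and "x \<in> V m n d e s u" "u \<le> s" "l \<le> 2*u"
  defines "N \<equiv> 2 * (n div e) * u - u + l"
  shows "(\<Sum>i=1..u. frob m (int (n div e) * int d) (x (2*i-1)) * (frob m (int d) ^^ N) (x (2*i))
            + (frob m (int d) ^^ N) (x (2*i-1)) * frob m (int (n div e) * int d) (x (2*i))) = 0"
proof -
  have "n div e \<noteq> 0"
    using assms(5,6) by (simp add: dvd_div_eq_0_iff)
  then have "u \<le> 2 * (n div e) * u"
    by simp
  then have "int N = int (2 * (n div e) * u) - int u + int l"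
    unfolding N_def by (simp only: of_nat_add of_nat_diff)
  then have exponent: "int N * int d = int (2 * (n div e) * u) * int d + (int l - int u) * int d"
    by (simp only:) (simp add: algebra_simps)
  \<comment> \<open>\<open>2 (n div e) d\<close> is a multiple of \<open>m\<close>, so the \<open>N\<close>-th iterate is the shift by \<open>l - u \<in> [-u, u]\<close>.\<close>
  have "(frob m (int d) ^^ N) y = frob m ((int l - int u) * int d) (y::'a)" for y
    using funpow_frob[OF assms(2,3), where z = "int d" and N = N and x = y]
    by (simp only: exponent frob_add_period_multiple[OF assms(4,6,7)])
  moreover have "\<bar>int l - int u\<bar> \<le> int s"
    using assms(9,10) by linarith
  ultimately show ?thesis
    using V_shifted_relations[OF assms(1-4,6-8)] by simp
qed

theorem theorem5p2:
  fixes x :: "nat \<Rightarrow> 'a::{field,finite}"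
    and m n d e s u :: nat
  assumes "card (UNIV :: 'a set) = 2 ^ m"
    and "m > 0" "n > 0" "d > 0" "e > 0"
    and "m = 2 * n"
    and "e = gcd n d" "e = gcd m d"
    and "u \<ge> 1" "s \<ge> u"
    and "x \<in> V m n d e s u"
  shows "lin_dep_over (subfield_pow2 e) ({1} \<union> {2*i | i. 1 \<le> i \<and> i \<le> u}) x"
proof -
  have char: "CHAR('a) = 2"
    using CHAR_eq_if_card_eq_prime_power[of 2 m] assms(1) by simp
  have period: "\<forall>y::'a. y ^ 2 ^ m = y"
    using power_card_UNIV_eq_self assms(1) by metis
  interpret \<sigma>: field_endomorphism "frob m (int d) :: 'a \<Rightarrow> 'a"
    using frob_field_endomorphism[OF char] .
  have fixed_field_eq: "\<sigma>.fixed_field = subfield_pow2 e"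
    using power_two_power_eq_self_iff_gcd[OF period \<open>d > 0\<close>] assms(8)
    by (simp add: \<sigma>.fixed_field_def subfield_pow2_def frob_of_nat[OF period] gcd.commute)
  have "e dvd n" "e dvd d"
    using assms(7) by simp_all
  define \<rho> :: "'a \<Rightarrow> 'a" where "\<rho> = frob m (int (n div e) * int d)"
  have \<rho>: "\<rho> = frob m (int d) ^^ (n div e)"
    by (simp add: \<rho>_def fun_eq_iff funpow_frob[OF period \<open>m > 0\<close>])
  have "lin_dep_over \<sigma>.fixed_field ({1} \<union> {2*i | i. 1 \<le> i \<and> i \<le> u}) x"
  proof (rule \<sigma>.paired_twisted_relations_dependent)
    show "field_endomorphism \<rho>" "\<forall>a\<in>\<sigma>.fixed_field. \<rho> a = a"
      by (simp_all add: \<rho> \<sigma>.funpow_field_endomorphism \<sigma>.fixed_field_funpow)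
    show "\<forall>l\<le>2*u. (\<Sum>i=1..u. \<rho> (x (2*i-1)) * (frob m (int d) ^^ (2 * (n div e) * u - u + l)) (x (2*i))
                  + (frob m (int d) ^^ (2 * (n div e) * u - u + l)) (x (2*i-1)) * \<rho> (x (2*i))) = 0"
      using V_funpow_relations[OF char period assms(2,6,3) \<open>e dvd n\<close> \<open>e dvd d\<close> assms(11,10)]
      by (simp add: \<rho>_def)
  qed (fact assms(9))
  then show ?thesis
    by (simp add: fixed_field_eq)
qed

end
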